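(* Let $P,Q\subseteq[n]$ be disjoint subsets, let $1\le k\le n$, and let $A\subseteq[n]$ be chosen uniformly at random among all subsets of size $k$. Then: (1) if $|P|\ge|Q|$ then $\mathbb{P}[|A\cap P|\ge|A\cap Q|]\ge\frac12$; (2) for all $s,t$, the events $\{|A\cap P|\ge s\}$ and $\{|A\cap Q|\le t\}$ are positively correlated, i.e. $\mathbb{P}[|A\cap P|\ge s\text{ and }|A\cap Q|\le t]\ge\mathbb{P}[|A\cap P|\ge s]\cdot\mathbb{P}[|A\cap Q|\le t]$. *)

theory Defs
  imports "HOL-Probability.Probability"
begin

definition uniform_ksubset :: "nat \<Rightarrow> nat \<Rightarrow> nat set pmf" where
  "uniform_ksubset n k = pmf_of_set {A. A \<subseteq> {1..n} \<and> card A = k}"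

end

theory Submission
  imports Defs
begin

text \<open>
  Write \<open>x = |A \<inter> P|\<close> and \<open>y = |A \<inter> Q|\<close>.

  (1) Choose \<open>P' \<subseteq> P\<close> with \<open>|P'| = |Q|\<close> and let \<open>\<sigma>\<close> be an involution of \<open>[n]\<close> exchanging \<open>Q\<close> and \<open>P'\<close>.
  The map \<open>A \<mapsto> \<sigma> A\<close> injects the \<open>k\<close>-subsets with \<open>x < y\<close> into those with \<open>y \<le> x\<close>.

  (2) There are \<open>G(x, y) = C(|P|, x) C(|Q|, y) C(r, k - x - y)\<close> subsets of size \<open>k\<close> with profile
  \<open>(x, y)\<close>, where \<open>r = n - |P| - |Q|\<close>. Log-concavity of binomial coefficients gives
  \<open>G(x, y) G(x', y') \<le> G(x, y') G(x', y)\<close> for \<open>x' \<le> x\<close> and \<open>y' \<le> y\<close>. Summing this over the quadrants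
  cut out by \<open>s\<close> and \<open>t\<close> gives \<open>Pr(E - F) Pr(F - E) \<le> Pr(E \<inter> F) Pr(-(E \<union> F))\<close> for
  \<open>E = {x \<ge> s}\<close> and \<open>F = {y \<le> t}\<close>, which is equivalent to \<open>Pr(E) Pr(F) \<le> Pr(E \<inter> F)\<close>.
\<close>

lemma binomial_log_concave_step:
  fixes r i m :: nat
  assumes "i < m"
  shows "(r choose i) * (r choose Suc m) \<le> (r choose Suc i) * (r choose m)"
proof -
  have absorb: "Suc j * (r choose Suc j) = (r - j) * (r choose j)" for j
    using binomial_absorption[of j r] binomial_absorb_comp[of r j] by simp
  have "Suc i * (r - m) \<le> Suc m * (r - i)"
    using assms by (intro mult_le_mono) auto
  have "((r choose i) * (r choose Suc m)) * (Suc i * Suc m)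
      = ((r choose i) * (r choose m)) * (Suc i * (r - m))"
    using absorb[of m] by (metis mult.assoc mult.commute mult.left_commute)
  also have "\<dots> \<le> ((r choose i) * (r choose m)) * (Suc m * (r - i))"
    using \<open>Suc i * (r - m) \<le> Suc m * (r - i)\<close> by (rule mult_le_mono2)
  also have "\<dots> = ((r choose Suc i) * (r choose m)) * (Suc i * Suc m)"
    using absorb[of i] by (metis mult.assoc mult.commute mult.left_commute)
  finally have "((r choose i) * (r choose Suc m)) * (Suc i * Suc m)
      \<le> ((r choose Suc i) * (r choose m)) * (Suc i * Suc m)" .
  then show ?thesis
    by (rule mult_le_cancel2[THEN iffD1, THEN mp]) simp
qed

lemma binomial_log_concave_shift:
  fixes r u d c :: nat
  shows "(r choose u) * (r choose (u + 2 * d + c)) \<le> (r choose (u + d)) * (r choose (u + d + c))"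
proof (induction d arbitrary: u)
  case 0
  show ?case by simp
next
  case (Suc d)
  have "(r choose u) * (r choose (u + 2 * Suc d + c))
      \<le> (r choose Suc u) * (r choose (Suc u + 2 * d + c))"
    using binomial_log_concave_step[of u "u + 2 * d + 1 + c" r] by simp
  also have "\<dots> \<le> (r choose (u + Suc d)) * (r choose (u + Suc d + c))"
    using Suc.IH[of "Suc u"] by simp
  finally show ?case .
qed

lemma binomial_log_concave:
  fixes r u a b :: nat
  shows "(r choose u) * (r choose (u + a + b)) \<le> (r choose (u + a)) * (r choose (u + b))"
proof (cases "a \<le> b")
  case True
  then show ?thesis
    using binomial_log_concave_shift[of r u a "b - a"] by (simp add: ac_simps)
next
  case False
  then show ?thesis
    using binomial_log_concave_shift[of r u b "a - b"] by (simp add: ac_simps)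
qed

lemma sum_mult_sum_le_swap:
  fixes G :: "'a \<Rightarrow> 'b \<Rightarrow> 'c::ordered_comm_semiring"
  assumes "\<And>x x' y y'. x \<in> X1 \<Longrightarrow> x' \<in> X0 \<Longrightarrow> y \<in> Y1 \<Longrightarrow> y' \<in> Y0 \<Longrightarrow>
             G x y * G x' y' \<le> G x y' * G x' y"
  shows "(\<Sum>x\<in>X1. \<Sum>y\<in>Y1. G x y) * (\<Sum>x\<in>X0. \<Sum>y\<in>Y0. G x y)
       \<le> (\<Sum>x\<in>X1. \<Sum>y\<in>Y0. G x y) * (\<Sum>x\<in>X0. \<Sum>y\<in>Y1. G x y)"
proof -
  have "(\<Sum>x\<in>X1. \<Sum>y\<in>Y1. G x y) * (\<Sum>x\<in>X0. \<Sum>y\<in>Y0. G x y)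
      = (\<Sum>x\<in>X1. \<Sum>x'\<in>X0. \<Sum>y\<in>Y1. \<Sum>y'\<in>Y0. G x y * G x' y')"
    by (simp add: sum_product sum.swap[of _ Y1 X0])
  also have "\<dots> \<le> (\<Sum>x\<in>X1. \<Sum>x'\<in>X0. \<Sum>y\<in>Y1. \<Sum>y'\<in>Y0. G x y' * G x' y)"
    using assms by (intro sum_mono) auto
  also have "\<dots> = (\<Sum>x\<in>X1. \<Sum>y\<in>Y0. G x y) * (\<Sum>x\<in>X0. \<Sum>y\<in>Y1. G x y)"
    by (simp add: sum_product sum.swap[of _ Y0 X0] sum.swap[of _ Y0 Y1])
  finally show ?thesis .
qed

lemma (in prob_space) prob_mult_le_prob_Int_iff:
  assumes "E \<in> events" "F \<in> events"
  shows "prob E * prob F \<le> prob (E \<inter> F)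
     \<longleftrightarrow> prob (E - F) * prob (F - E) \<le> prob (E \<inter> F) * prob (space M - (E \<union> F))"
proof -
  have split: "prob X = prob (X \<inter> Y) + prob (X - Y)" if "X \<in> events" "Y \<in> events" for X Y
  proof -
    have "X = (X \<inter> Y) \<union> (X - Y)"
      by blast
    then show ?thesis
      using finite_measure_Union[of "X \<inter> Y" "X - Y"] that by auto
  qed
  have E: "prob E = prob (E \<inter> F) + prob (E - F)"
    using split assms by blast
  have F: "prob F = prob (E \<inter> F) + prob (F - E)"
    using split[OF assms(2,1)] by (simp add: Int_commute)
  have "prob (E \<union> F) = prob (E \<inter> F) + prob (E - F) + prob (F - E)"
    using assms finite_measure_Union'[of E F] E by (simp add: Un_Diff)
  then have compl: "prob (space M - (E \<union> F)) = 1 - (prob (E \<inter> F) + prob (E - F) + prob (F - E))"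
    using assms by (simp add: prob_compl)
  have "prob (E \<inter> F) - prob E * prob F
      = prob (E \<inter> F) * prob (space M - (E \<union> F)) - prob (E - F) * prob (F - E)"
    unfolding E F compl by (simp add: algebra_simps)
  then show ?thesis
    by linarith
qed

lemma card_Collect_pair_eq_sum:
  assumes "finite S" "finite X" "finite Y"
  shows "card {a \<in> S. f a \<in> X \<and> g a \<in> Y} = (\<Sum>x\<in>X. \<Sum>y\<in>Y. card {a \<in> S. f a = x \<and> g a = y})"
proof -
  have "{a \<in> S. f a \<in> X \<and> g a \<in> Y} = (\<Union>x\<in>X. \<Union>y\<in>Y. {a \<in> S. f a = x \<and> g a = y})"
    by auto
  also have "card \<dots> = (\<Sum>x\<in>X. card (\<Union>y\<in>Y. {a \<in> S. f a = x \<and> g a = y}))"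
    by (rule card_UN_disjoint) (use assms in auto)
  also have "\<dots> = (\<Sum>x\<in>X. \<Sum>y\<in>Y. card {a \<in> S. f a = x \<and> g a = y})"
    by (rule sum.cong[OF refl], rule card_UN_disjoint) (use assms in auto)
  finally show ?thesis .
qed

lemma card_split_disjoint_parts:
  assumes "finite A" "P \<inter> Q = {}"
  shows "card A = card (A \<inter> P) + card (A \<inter> Q) + card (A - P - Q)"
proof -
  have "(A - P) \<inter> Q = A \<inter> Q"
    using assms(2) by blast
  moreover have "card A = card (A \<inter> P) + card (A - P)" "card (A - P) = card ((A - P) \<inter> Q) + card (A - P - Q)"
    using assms(1) card_Int_Diff by blast+
  ultimately show ?thesis
    by simp
qed

lemma obtain_involution_swapping:
  assumes "bij_betw h A B" "A \<inter> B = {}"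
  obtains \<sigma> where "\<And>z. \<sigma> (\<sigma> z) = z" "\<sigma> ` A = B" "\<And>z. z \<notin> A \<union> B \<Longrightarrow> \<sigma> z = z"
proof -
  define \<sigma> where "\<sigma> z = (if z \<in> A then h z else if z \<in> B then inv_into A h z else z)" for z
  have "\<sigma> (\<sigma> z) = z" for z
  proof (cases "z \<in> A")
    case True
    then have "h z \<in> B" "h z \<notin> A"
      using assms bij_betwE by blast+
    then show ?thesis
      using True assms(1) by (simp add: \<sigma>_def bij_betw_inv_into_left)
  next
    case False
    show ?thesis
    proof (cases "z \<in> B")
      case True
      then have "inv_into A h z \<in> A"
        using bij_betw_inv_into[OF assms(1)] bij_betwE by blast
      then show ?thesis
        using False True assms(1) by (simp add: \<sigma>_def bij_betw_inv_into_right)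
    qed (use False in \<open>simp add: \<sigma>_def\<close>)
  qed
  moreover have "\<sigma> ` A = B"
    using assms(1) by (auto simp: \<sigma>_def bij_betw_def)
  ultimately show thesis
    using that[of \<sigma>] by (simp add: \<sigma>_def)
qed

definition ksubsets :: "'a set \<Rightarrow> nat \<Rightarrow> 'a set set" where
  "ksubsets U k = {A. A \<subseteq> U \<and> card A = k}"

lemma finite_ksubsets: "finite U \<Longrightarrow> finite (ksubsets U k)"
  unfolding ksubsets_def by (auto intro: rev_finite_subset[of "Pow U"])

lemma ksubsets_nonempty:
  assumes "k \<le> card U"
  shows "ksubsets U k \<noteq> {}"
proof -
  obtain A where "A \<subseteq> U" "card A = k"
    using obtain_subset_with_card_n[OF assms] by metis
  then show ?thesis
    unfolding ksubsets_def by blast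
qed

lemma card_ksubsets_Int_eq:
  assumes "finite U" "P \<subseteq> U" "Q \<subseteq> U" "P \<inter> Q = {}"
  shows "card {A \<in> ksubsets U k. card (A \<inter> P) = x \<and> card (A \<inter> Q) = y}
       = (card P choose x) * (card Q choose y)
         * (if x + y \<le> k then card (U - P - Q) choose (k - (x + y)) else 0)"
proof -
  have parts: "card A = card (A \<inter> P) + card (A \<inter> Q) + card (A - P - Q)" if "A \<subseteq> U" for A
    using card_split_disjoint_parts[OF finite_subset[OF that assms(1)] assms(4)] .
  show ?thesis
  proof (cases "x + y \<le> k")
    case False
    have empty: "{A \<in> ksubsets U k. card (A \<inter> P) = x \<and> card (A \<inter> Q) = y} = {}"
    proof (intro equals0I)
      fix A assume "A \<in> {A \<in> ksubsets U k. card (A \<inter> P) = x \<and> card (A \<inter> Q) = y}"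
      then show False
        using parts[of A] False unfolding ksubsets_def by auto
    qed
    show ?thesis
      unfolding empty using False by simp
  next
    case True
    define R where "R = U - P - Q"
    define T where "T = {A \<in> ksubsets U k. card (A \<inter> P) = x \<and> card (A \<inter> Q) = y}"
    define Z where "Z = {B. B \<subseteq> P \<and> card B = x} \<times> {C. C \<subseteq> Q \<and> card C = y}
                        \<times> {D. D \<subseteq> R \<and> card D = k - (x + y)}"
    have finite: "finite P" "finite Q" "finite R"
      using assms finite_subset unfolding R_def by auto
    have "bij_betw (\<lambda>A. (A \<inter> P, A \<inter> Q, A - P - Q)) T Z"
    proof (rule bij_betwI[where g = "\<lambda>(B, C, D). B \<union> C \<union> D"])
      show "(\<lambda>A. (A \<inter> P, A \<inter> Q, A - P - Q)) \<in> T \<rightarrow> Z"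
      proof
        fix A assume "A \<in> T"
        then have A: "A \<subseteq> U" "card A = k" "card (A \<inter> P) = x" "card (A \<inter> Q) = y"
          by (auto simp: T_def ksubsets_def)
        then have "card (A - P - Q) = k - (x + y)"
          using parts[of A] by linarith
        then show "(A \<inter> P, A \<inter> Q, A - P - Q) \<in> Z"
          using A by (auto simp: Z_def R_def)
      qed
      show "(\<lambda>(B, C, D). B \<union> C \<union> D) \<in> Z \<rightarrow> T"
      proof
        fix z assume "z \<in> Z"
        then obtain B C D where z: "z = (B, C, D)" "B \<subseteq> P" "card B = x" "C \<subseteq> Q" "card C = y"
          "D \<subseteq> R" "card D = k - (x + y)"
          by (auto simp: Z_def)
        have BCD: "B \<union> C \<union> D \<subseteq> U" "(B \<union> C \<union> D) \<inter> P = B" "(B \<union> C \<union> D) \<inter> Q = C"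
          "B \<union> C \<union> D - P - Q = D"
          using z assms unfolding R_def by auto
        then have "card (B \<union> C \<union> D) = k"
          using parts[of "B \<union> C \<union> D"] z True by simp
        then show "(case z of (B, C, D) \<Rightarrow> B \<union> C \<union> D) \<in> T"
          using BCD z unfolding T_def ksubsets_def by simp
      qed
      show "(case (A \<inter> P, A \<inter> Q, A - P - Q) of (B, C, D) \<Rightarrow> B \<union> C \<union> D) = A" if "A \<in> T" for A
        using that unfolding T_def ksubsets_def by auto
      show "(\<lambda>A. (A \<inter> P, A \<inter> Q, A - P - Q)) (case z of (B, C, D) \<Rightarrow> B \<union> C \<union> D) = z"
        if "z \<in> Z" for z
        using that assms(4) unfolding Z_def R_def by auto
    qed
    then have "card T = card Z"
      by (rule bij_betw_same_card)
    then show ?thesis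
      using True finite by (simp add: T_def Z_def R_def card_cartesian_product n_subsets)
  qed
qed

lemma card_ksubsets_Int_swap_le:
  assumes "finite U" "P \<subseteq> U" "Q \<subseteq> U" "P \<inter> Q = {}" "x' \<le> x" "y' \<le> y"
  shows "card {A \<in> ksubsets U k. card (A \<inter> P) = x \<and> card (A \<inter> Q) = y}
         * card {A \<in> ksubsets U k. card (A \<inter> P) = x' \<and> card (A \<inter> Q) = y'}
       \<le> card {A \<in> ksubsets U k. card (A \<inter> P) = x \<and> card (A \<inter> Q) = y'}
         * card {A \<in> ksubsets U k. card (A \<inter> P) = x' \<and> card (A \<inter> Q) = y}"
proof -
  define r where "r = card (U - P - Q)"
  define h where "h j = (if j \<le> k then r choose (k - j) else 0)" for j
  have h_log_concave: "h (j + a + b) * h j \<le> h (j + a) * h (j + b)" for j a b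
  proof (cases "j + a + b \<le> k")
    case True
    define u where "u = k - (j + a + b)"
    have "k - (j + a + b) = u" "k - j = u + b + a" "k - (j + a) = u + b" "k - (j + b) = u + a"
      using True by (auto simp: u_def)
    then show ?thesis
      using True binomial_log_concave[of r u b a] by (simp add: h_def)
  next
    case False
    then show ?thesis
      by (simp add: h_def)
  qed
  have count: "card {A \<in> ksubsets U k. card (A \<inter> P) = a \<and> card (A \<inter> Q) = b}
      = (card P choose a) * (card Q choose b) * h (a + b)" for a b
    unfolding h_def r_def by (rule card_ksubsets_Int_eq[OF assms(1-4)])
  \<comment> \<open>The factors for \<open>P\<close> and \<open>Q\<close> are the same on both sides; only the \<open>U - P - Q\<close> factor matters.\<close>
  have "x' + y' + (x - x') + (y - y') = x + y" "x' + y' + (x - x') = x + y'" "x' + y' + (y - y') = x' + y"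
    using assms(5,6) by simp_all
  then have "h (x + y) * h (x' + y') \<le> h (x + y') * h (x' + y)"
    using h_log_concave[of "x' + y'" "x - x'" "y - y'"] by (simp only:)
  then show ?thesis
    unfolding count
    using mult_le_mono2[of _ _ "(card P choose x) * (card Q choose y) * (card P choose x') * (card Q choose y')"]
    by (simp add: ac_simps)
qed

lemma card_ksubsets_correlation_cross_le:
  fixes k s t :: nat
  assumes "finite U" "P \<subseteq> U" "Q \<subseteq> U" "P \<inter> Q = {}"
  defines "K \<equiv> ksubsets U k" and "E \<equiv> {A. s \<le> card (A \<inter> P)}" and "F \<equiv> {A. card (A \<inter> Q) \<le> t}"
  shows "card (K \<inter> (E - F)) * card (K \<inter> (F - E)) \<le> card (K \<inter> (E \<inter> F)) * card (K - (E \<union> F))"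
proof -
  define N where "N = card U"
  define G where "G x y = card {A \<in> K. card (A \<inter> P) = x \<and> card (A \<inter> Q) = y}" for x y
  have bounded: "card (A \<inter> P) \<le> N" "card (A \<inter> Q) \<le> N" if "A \<in> K" for A
    using that assms(1) by (auto simp: K_def ksubsets_def N_def intro!: card_mono)
  have count: "card {A \<in> K. card (A \<inter> P) \<in> X \<and> card (A \<inter> Q) \<in> Y} = (\<Sum>x\<in>X. \<Sum>y\<in>Y. G x y)"
    if "finite X" "finite Y" for X Y
    unfolding G_def using that finite_ksubsets[OF assms(1)] by (intro card_Collect_pair_eq_sum) (auto simp: K_def)
  have "K \<inter> (E - F) = {A \<in> K. card (A \<inter> P) \<in> {s..N} \<and> card (A \<inter> Q) \<in> {t<..N}}"
    "K \<inter> (F - E) = {A \<in> K. card (A \<inter> P) \<in> {..<s} \<and> card (A \<inter> Q) \<in> {..t}}"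
    "K \<inter> (E \<inter> F) = {A \<in> K. card (A \<inter> P) \<in> {s..N} \<and> card (A \<inter> Q) \<in> {..t}}"
    "K - (E \<union> F) = {A \<in> K. card (A \<inter> P) \<in> {..<s} \<and> card (A \<inter> Q) \<in> {t<..N}}"
    using bounded by (auto simp: E_def F_def)
  then have "card (K \<inter> (E - F)) = (\<Sum>x\<in>{s..N}. \<Sum>y\<in>{t<..N}. G x y)"
    "card (K \<inter> (F - E)) = (\<Sum>x\<in>{..<s}. \<Sum>y\<in>{..t}. G x y)"
    "card (K \<inter> (E \<inter> F)) = (\<Sum>x\<in>{s..N}. \<Sum>y\<in>{..t}. G x y)"
    "card (K - (E \<union> F)) = (\<Sum>x\<in>{..<s}. \<Sum>y\<in>{t<..N}. G x y)"
    by (simp_all only: count finite_atLeastAtMost finite_greaterThanAtMost finite_lessThan finite_atMost)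
  moreover have "G x y * G x' y' \<le> G x y' * G x' y" if "x' \<le> x" "y' \<le> y" for x x' y y'
    unfolding G_def K_def by (rule card_ksubsets_Int_swap_le[OF assms(1-4) that])
  ultimately show ?thesis
    by (simp only:) (rule sum_mult_sum_le_swap, auto)
qed

lemma card_ksubsets_Int_less_le_involution:
  assumes "finite U" "\<And>z. \<sigma> (\<sigma> z) = z" "\<sigma> ` U \<subseteq> U" "\<sigma> ` Q \<subseteq> P"
  shows "card {A \<in> ksubsets U k. card (A \<inter> P) < card (A \<inter> Q)}
       \<le> card {A \<in> ksubsets U k. card (A \<inter> Q) \<le> card (A \<inter> P)}"
proof (rule card_inj_on_le[where f = "image \<sigma>"])
  have inj: "inj \<sigma>"
    using involuntory_imp_bij[OF assms(2)] by (rule bij_is_inj)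
  then show "inj_on (image \<sigma>) {A \<in> ksubsets U k. card (A \<inter> P) < card (A \<inter> Q)}"
    by (simp add: inj_on_def inj_image_eq_iff)
  show "finite {A \<in> ksubsets U k. card (A \<inter> Q) \<le> card (A \<inter> P)}"
    using finite_ksubsets[OF assms(1)] by simp
  show "image \<sigma> ` {A \<in> ksubsets U k. card (A \<inter> P) < card (A \<inter> Q)}
      \<subseteq> {A \<in> ksubsets U k. card (A \<inter> Q) \<le> card (A \<inter> P)}"
  proof (rule image_subsetI)
    fix A assume "A \<in> {A \<in> ksubsets U k. card (A \<inter> P) < card (A \<inter> Q)}"
    then have A: "A \<in> ksubsets U k" "card (A \<inter> P) < card (A \<inter> Q)"
      by simp_all
    then have "A \<subseteq> U" "finite A"
      using assms(1) finite_subset by (auto simp: ksubsets_def)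
    \<comment> \<open>As \<open>\<sigma>\<close> is an involution, \<open>\<sigma> ` Q \<subseteq> P\<close> controls both \<open>\<sigma> ` A \<inter> Q\<close> and \<open>\<sigma> ` A \<inter> P\<close>.\<close>
    have "\<sigma> ` (\<sigma> ` Q) = Q"
      using assms(2) by (simp add: image_comp comp_def)
    then have "card (\<sigma> ` A \<inter> Q) = card (A \<inter> \<sigma> ` Q)"
      using inj by (metis card_image image_Int inj_on_subset subset_UNIV)
    also have "\<dots> \<le> card (A \<inter> P)"
      using assms(4) \<open>finite A\<close> by (intro card_mono) auto
    also have "\<dots> < card (A \<inter> Q)"
      by (fact A(2))
    also have "\<dots> = card (\<sigma> ` (A \<inter> Q))"
      using inj by (simp add: card_image inj_on_subset)
    also have "\<dots> \<le> card (\<sigma> ` A \<inter> P)"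
      using assms(4) \<open>finite A\<close> by (intro card_mono) auto
    finally have "card (\<sigma> ` A \<inter> Q) \<le> card (\<sigma> ` A \<inter> P)"
      by simp
    moreover have "\<sigma> ` A \<in> ksubsets U k"
      using A(1) \<open>A \<subseteq> U\<close> assms(3) inj by (auto simp: ksubsets_def card_image inj_on_subset)
    ultimately show "\<sigma> ` A \<in> {A \<in> ksubsets U k. card (A \<inter> Q) \<le> card (A \<inter> P)}"
      by simp
  qed
qed

lemma card_ksubsets_Int_less_le:
  assumes "finite U" "P \<subseteq> U" "Q \<subseteq> U" "P \<inter> Q = {}" "card Q \<le> card P"
  shows "card {A \<in> ksubsets U k. card (A \<inter> P) < card (A \<inter> Q)}
       \<le> card {A \<in> ksubsets U k. card (A \<inter> Q) \<le> card (A \<inter> P)}"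
proof -
  obtain P' where P': "P' \<subseteq> P" "card P' = card Q" "finite P'"
    by (rule obtain_subset_with_card_n[OF assms(5)])
  have "finite Q"
    using assms(1,3) by (rule finite_subset[rotated])
  obtain h where h: "bij_betw h Q P'"
    using finite_same_card_bij[OF \<open>finite Q\<close> P'(3) P'(2)[symmetric]] by blast
  have disj: "Q \<inter> P' = {}"
    using P'(1) assms(4) by blast
  obtain \<sigma> where \<sigma>: "\<And>z. \<sigma> (\<sigma> z) = z" "\<sigma> ` Q = P'" "\<And>z. z \<notin> Q \<union> P' \<Longrightarrow> \<sigma> z = z"
    using obtain_involution_swapping[OF h disj] by metis
  have "\<sigma> ` P' = \<sigma> ` \<sigma> ` Q"
    using \<sigma>(2) by simp
  also have "\<dots> = Q"
    using \<sigma>(1) by (simp add: image_comp comp_def)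
  finally have "\<sigma> ` P' = Q" .
  have "\<sigma> z \<in> U" if "z \<in> U" for z
  proof (cases "z \<in> Q \<union> P'")
    case True
    then have "\<sigma> z \<in> \<sigma> ` Q \<union> \<sigma> ` P'"
      by blast
    then have "\<sigma> z \<in> P' \<union> Q"
      using \<sigma>(2) \<open>\<sigma> ` P' = Q\<close> by simp
    then show ?thesis
      using P'(1) assms(2,3) by blast
  next
    case False
    then show ?thesis
      using \<sigma>(3) that by simp
  qed
  then have "\<sigma> ` U \<subseteq> U"
    by blast
  moreover have "\<sigma> ` Q \<subseteq> P"
    using \<sigma>(2) P'(1) by simp
  ultimately show ?thesis
    by (rule card_ksubsets_Int_less_le_involution[OF assms(1) \<sigma>(1)])
qed

lemma prob_ksubsets_card_Int_le_ge_half: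
  assumes "finite U" "P \<subseteq> U" "Q \<subseteq> U" "P \<inter> Q = {}" "card Q \<le> card P" "k \<le> card U"
  shows "measure_pmf.prob (pmf_of_set (ksubsets U k)) {A. card (A \<inter> Q) \<le> card (A \<inter> P)} \<ge> 1/2"
proof -
  let ?K = "ksubsets U k" and ?E = "{A. card (A \<inter> Q) \<le> card (A \<inter> P)}"
  let ?prob = "measure_pmf.prob (pmf_of_set ?K)"
  have K: "?K \<noteq> {}" "finite ?K"
    using assms(1,6) by (simp_all add: ksubsets_nonempty finite_ksubsets)
  have "?K \<inter> - ?E = {A \<in> ?K. card (A \<inter> P) < card (A \<inter> Q)}" "?K \<inter> ?E = {A \<in> ?K. card (A \<inter> Q) \<le> card (A \<inter> P)}"
    by auto
  then have "card (?K \<inter> - ?E) \<le> card (?K \<inter> ?E)"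
    using card_ksubsets_Int_less_le[OF assms(1-5)] by simp
  then have "?prob (- ?E) \<le> ?prob ?E"
    using K by (simp add: measure_pmf_of_set divide_right_mono)
  moreover have "?prob (- ?E) = 1 - ?prob ?E"
    using measure_pmf.prob_compl[of ?E "pmf_of_set ?K"] by (simp add: Compl_eq_Diff_UNIV)
  ultimately show ?thesis
    by linarith
qed

lemma prob_ksubsets_positively_correlated:
  assumes "finite U" "P \<subseteq> U" "Q \<subseteq> U" "P \<inter> Q = {}" "k \<le> card U"
  shows "measure_pmf.prob (pmf_of_set (ksubsets U k)) {A. card (A \<inter> P) \<ge> s \<and> card (A \<inter> Q) \<le> t}
       \<ge> measure_pmf.prob (pmf_of_set (ksubsets U k)) {A. card (A \<inter> P) \<ge> s}
         * measure_pmf.prob (pmf_of_set (ksubsets U k)) {A. card (A \<inter> Q) \<le> t}"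
proof -
  let ?K = "ksubsets U k" and ?E = "{A. s \<le> card (A \<inter> P)}" and ?F = "{A. card (A \<inter> Q) \<le> t}"
  let ?prob = "measure_pmf.prob (pmf_of_set ?K)"
  have K: "?K \<noteq> {}" "finite ?K"
    using assms(1,5) by (simp_all add: ksubsets_nonempty finite_ksubsets)
  have "real (card (?K \<inter> (?E - ?F)) * card (?K \<inter> (?F - ?E)))
      \<le> real (card (?K \<inter> (?E \<inter> ?F)) * card (?K - (?E \<union> ?F)))"
    using card_ksubsets_correlation_cross_le[OF assms(1-4)] by (simp only: of_nat_le_iff)
  then have "?prob (?E - ?F) * ?prob (?F - ?E) \<le> ?prob (?E \<inter> ?F) * ?prob (UNIV - (?E \<union> ?F))"
    using K by (simp add: measure_pmf_of_set Diff_eq divide_right_mono)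
  then have "?prob ?E * ?prob ?F \<le> ?prob (?E \<inter> ?F)"
    using measure_pmf.prob_mult_le_prob_Int_iff[of ?E "pmf_of_set ?K" ?F] by simp
  then show ?thesis
    by (simp add: Collect_conj_eq)
qed

theorem lemma2p8:
  fixes n k :: nat and P Q :: "nat set"
  assumes "P \<subseteq> {1..n}" and "Q \<subseteq> {1..n}" and "P \<inter> Q = {}"
    and "1 \<le> k" and "k \<le> n"
  shows "(card P \<ge> card Q \<longrightarrow>
           measure_pmf.prob (uniform_ksubset n k) {A. card (A \<inter> P) \<ge> card (A \<inter> Q)} \<ge> 1/2)
       \<and> (\<forall>s t :: nat.
           measure_pmf.prob (uniform_ksubset n k) {A. card (A \<inter> P) \<ge> s \<and> card (A \<inter> Q) \<le> t}
           \<ge> measure_pmf.prob (uniform_ksubset n k) {A. card (A \<inter> P) \<ge> s}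
             * measure_pmf.prob (uniform_ksubset n k) {A. card (A \<inter> Q) \<le> t})"
proof -
  have uniform: "uniform_ksubset n k = pmf_of_set (ksubsets {1..n} k)"
    unfolding uniform_ksubset_def ksubsets_def ..
  have "finite {1..n}" "card {1..n} = n"
    by simp_all
  then show ?thesis
    unfolding uniform
    using prob_ksubsets_card_Int_le_ge_half[of "{1..n}" P Q k] prob_ksubsets_positively_correlated[of "{1..n}" P Q k]
      assms(1-3,5)
    by simp
qed

end
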